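(* Let $S=\{1,\ldots,K\}$, $K>1$, let $T\ge 1$, and let $p$ be the distribution of any first order Markov chain on $S^T$ (for a path $s^T=(s_1,\ldots,s_T)\in S^T$ and $1\le m\le n\le T$, $p(s_m^n)$ denotes the marginal probability that the chain takes values $(s_m,\ldots,s_n)$ at times $m,\ldots,n$). For a positive integer $k\le T$ define $$\bar U_k(s^T):=\prod_{j=1-k}^{T-1}p\big(s_{(j+1)\vee 1}^{(j+k)\wedge T}\big),\qquad \bar R_k(s^T):=-\frac{1}{T}\ln \bar U_k(s^T),$$ and $\bar R_\infty(s^T):=-\frac{1}{T}\log p(s^T)$. Let $k$ be such that $T\geq k>1$. Then $$\bar R_k(s^T)=\bar R_{\infty}(s^T)+\bar R_{k-1}(s^T)\quad\text{for all } s^T\in S^T.$$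
   Context: Here $a\vee b=\max\{a,b\}$ and $a\wedge b=\min\{a,b\}$. For $k=1$, $\bar R_1(s^T)=-\frac1T\sum_{t=1}^T\log p(s_t)$ (log-pseudo-likelihood risk). Equivalently, $\bar U_k(s^T)=p(s^T)\,\bar U_{k-1}(s^T)$. *)

theory Defs
  imports "HOL-Analysis.Analysis" "HOL-Library.Extended_Real"
begin

definition paths :: "nat \<Rightarrow> nat \<Rightarrow> (nat \<Rightarrow> nat) set" where
  "paths K T = PiE {1..T} (\<lambda>_. {1..K})"

text \<open>A first order (possibly time-inhomogeneous) Markov chain on S^T, given by an initial
  distribution pi on S and transition matrices P t (from time t to t+1), 1 <= t < T.\<close>
definition is_markov_chain :: "nat \<Rightarrow> nat \<Rightarrow> (nat \<Rightarrow> real) \<Rightarrow> (nat \<Rightarrow> nat \<Rightarrow> nat \<Rightarrow> real) \<Rightarrow> bool" where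
  "is_markov_chain K T \<pi> P \<longleftrightarrow>
     (\<forall>i\<in>{1..K}. \<pi> i \<ge> 0) \<and> (\<Sum>i\<in>{1..K}. \<pi> i) = 1 \<and>
     (\<forall>t\<in>{1..<T}. \<forall>i\<in>{1..K}. (\<forall>j\<in>{1..K}. P t i j \<ge> 0) \<and> (\<Sum>j\<in>{1..K}. P t i j) = 1)"

definition joint :: "nat \<Rightarrow> (nat \<Rightarrow> real) \<Rightarrow> (nat \<Rightarrow> nat \<Rightarrow> nat \<Rightarrow> real) \<Rightarrow> (nat \<Rightarrow> nat) \<Rightarrow> real" where
  "joint T \<pi> P x = \<pi> (x 1) * (\<Prod>t\<in>{1..<T}. P t (x t) (x (t+1)))"

definition marg :: "nat \<Rightarrow> nat \<Rightarrow> (nat \<Rightarrow> real) \<Rightarrow> (nat \<Rightarrow> nat \<Rightarrow> nat \<Rightarrow> real) \<Rightarrow> nat \<Rightarrow> nat \<Rightarrow> (nat \<Rightarrow> nat) \<Rightarrow> real" where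
  "marg K T \<pi> P m n s = (\<Sum>x\<in>{x\<in>paths K T. \<forall>i\<in>{m..n}. x i = s i}. joint T \<pi> P x)"

definition Ubar :: "nat \<Rightarrow> nat \<Rightarrow> (nat \<Rightarrow> real) \<Rightarrow> (nat \<Rightarrow> nat \<Rightarrow> nat \<Rightarrow> real) \<Rightarrow> nat \<Rightarrow> (nat \<Rightarrow> nat) \<Rightarrow> real" where
  "Ubar K T \<pi> P k s = (\<Prod>j\<in>{1 - int k..int T - 1}.
      marg K T \<pi> P (nat (max (j+1) 1)) (nat (min (j + int k) (int T))) s)"

text \<open>Natural log extended to [0,\<infinity>) with ln 0 = -\<infinity> (so risks may be +\<infinity>).\<close>
definition eln :: "real \<Rightarrow> ereal" where
  "eln x = (if x = 0 then -\<infinity> else ereal (ln x))"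

definition Rbar :: "nat \<Rightarrow> nat \<Rightarrow> (nat \<Rightarrow> real) \<Rightarrow> (nat \<Rightarrow> nat \<Rightarrow> nat \<Rightarrow> real) \<Rightarrow> nat \<Rightarrow> (nat \<Rightarrow> nat) \<Rightarrow> ereal" where
  "Rbar K T \<pi> P k s = - (ereal (1 / real T) * eln (Ubar K T \<pi> P k s))"

definition Rbar_inf :: "nat \<Rightarrow> nat \<Rightarrow> (nat \<Rightarrow> real) \<Rightarrow> (nat \<Rightarrow> nat \<Rightarrow> nat \<Rightarrow> real) \<Rightarrow> (nat \<Rightarrow> nat) \<Rightarrow> ereal" where
  "Rbar_inf K T \<pi> P s = - (ereal (1 / real T) * eln (marg K T \<pi> P 1 T s))"

end

theory Submission
  imports Defs
begin

text \<open>For a Markov chain, extending an observed window by one time step multiplies its marginal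
  by a transition probability: p(s_m..s_{n+1}) = p(s_m..s_n) P_n(s_n, s_{n+1}). Hence every factor
  of U_k is the corresponding factor of U_{k-1} times one transition probability, except for the
  windows already truncated at T. The first factor of U_k is p(s_1), and together with the T - 1
  transitions collected this way it forms p(s^T). So U_k = p(s^T) U_{k-1}, and applying
  -(1/T) ln gives the claim.\<close>

lemma sum_PiE_insert:
  assumes "x \<notin> S"
  shows "(\<Sum>f\<in>PiE (insert x S) B. g f) = (\<Sum>f\<in>PiE S B. \<Sum>y\<in>B x. g (f(x := y)))"
proof -
  have "(\<Sum>f\<in>PiE (insert x S) B. g f) = (\<Sum>(y, f)\<in>B x \<times> PiE S B. g (f(x := y)))"
    unfolding PiE_insert_eq sum.reindex[OF inj_combinator[OF assms]]
    by (simp add: comp_def case_prod_unfold)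
  also have "\<dots> = (\<Sum>f\<in>PiE S B. \<Sum>y\<in>B x. g (f(x := y)))"
    by (simp add: sum.cartesian_product[symmetric] sum.swap[of _ "B x"])
  finally show ?thesis .
qed

lemma sum_paths_Suc:
  "(\<Sum>x\<in>paths K (Suc n). g x) = (\<Sum>y\<in>paths K n. \<Sum>i\<in>{1..K}. g (y(Suc n := i)))"
proof -
  have "{1..Suc n} = insert (Suc n) {1..n}" by auto
  then show ?thesis unfolding paths_def by (simp add: sum_PiE_insert)
qed

lemma paths_memD: "x \<in> paths K T \<Longrightarrow> i \<in> {1..T} \<Longrightarrow> x i \<in> {1..K}"
  by (auto simp: paths_def)

lemma joint_fun_upd_Suc:
  assumes "n \<ge> 1"
  shows "joint (Suc n) \<pi> P (y(Suc n := i)) = joint n \<pi> P y * P n (y n) i"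
proof -
  have "(\<Prod>t\<in>{1..<n}. P t ((y(Suc n := i)) t) ((y(Suc n := i)) (t+1)))
      = (\<Prod>t\<in>{1..<n}. P t (y t) (y (t+1)))"
    by (rule prod.cong) auto
  moreover have "{1..<Suc n} = insert n {1..<n}" using assms by auto
  ultimately show ?thesis using assms by (simp add: joint_def algebra_simps)
qed

lemma joint_nonneg:
  assumes mc: "is_markov_chain K T \<pi> P" and x: "x \<in> paths K T" and T: "T \<ge> 1"
  shows "joint T \<pi> P x \<ge> 0"
proof -
  have "\<pi> (x 1) \<ge> 0" using mc paths_memD[OF x, of 1] T by (auto simp: is_markov_chain_def)
  moreover have "(\<Prod>t\<in>{1..<T}. P t (x t) (x (t+1))) \<ge> 0"
    by (rule prod_nonneg) (use mc paths_memD[OF x] in \<open>auto simp: is_markov_chain_def\<close>)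
  ultimately show ?thesis by (simp add: joint_def)
qed

lemma marg_nonneg:
  assumes "is_markov_chain K T \<pi> P" and "T \<ge> 1"
  shows "marg K T \<pi> P a b s \<ge> 0"
  unfolding marg_def by (rule sum_nonneg) (use joint_nonneg[OF assms(1) _ assms(2)] in auto)

lemma Ubar_nonneg:
  assumes "is_markov_chain K T \<pi> P" and "T \<ge> 1"
  shows "Ubar K T \<pi> P k s \<ge> 0"
  unfolding Ubar_def by (rule prod_nonneg) (use marg_nonneg[OF assms] in auto)

definition event_prob ::
    "nat \<Rightarrow> nat \<Rightarrow> (nat \<Rightarrow> real) \<Rightarrow> (nat \<Rightarrow> nat \<Rightarrow> nat \<Rightarrow> real) \<Rightarrow> ((nat \<Rightarrow> nat) \<Rightarrow> bool) \<Rightarrow> real"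
  where "event_prob K n \<pi> P E = (\<Sum>x\<in>paths K n. if E x then joint n \<pi> P x else 0)"

lemma event_prob_Suc_horizon:
  assumes mc: "is_markov_chain K T \<pi> P" and n: "1 \<le> n" "n < T"
    and E: "\<And>x y. (\<forall>i\<in>{1..n}. x i = y i) \<Longrightarrow> E x = E y"
  shows "event_prob K (Suc n) \<pi> P E = event_prob K n \<pi> P E"
  unfolding event_prob_def sum_paths_Suc
proof (rule sum.cong[OF refl])
  fix y assume y: "y \<in> paths K n"
  have "(\<Sum>i\<in>{1..K}. P n (y n) i) = 1"
    using mc n paths_memD[OF y, of n] by (auto simp: is_markov_chain_def)
  moreover have "E (y(Suc n := i)) = E y" for i by (rule E) auto
  ultimately show "(\<Sum>i\<in>{1..K}. if E (y(Suc n := i)) then joint (Suc n) \<pi> P (y(Suc n := i)) else 0)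
      = (if E y then joint n \<pi> P y else 0)"
    by (simp add: joint_fun_upd_Suc[OF n(1)] sum_distrib_left[symmetric])
qed

lemma event_prob_horizon_indep:
  assumes mc: "is_markov_chain K T \<pi> P" and n: "1 \<le> n" "n \<le> m" "m \<le> T"
    and E: "\<And>x y. (\<forall>i\<in>{1..n}. x i = y i) \<Longrightarrow> E x = E y"
  shows "event_prob K m \<pi> P E = event_prob K n \<pi> P E"
  using n(2,3)
proof (induction m rule: dec_induct)
  case base
  then show ?case by simp
next
  case (step m)
  have "event_prob K (Suc m) \<pi> P E = event_prob K m \<pi> P E"
    by (rule event_prob_Suc_horizon[OF mc]) (use step n E in auto)
  with step show ?case by simp
qed

lemma event_prob_window_Suc:
  assumes ab: "1 \<le> a" "a \<le> b" and s: "s (Suc b) \<in> {1..K}"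
  shows "event_prob K (Suc b) \<pi> P (\<lambda>x. \<forall>i\<in>{a..Suc b}. x i = s i)
       = event_prob K b \<pi> P (\<lambda>x. \<forall>i\<in>{a..b}. x i = s i) * P b (s b) (s (Suc b))"
  unfolding event_prob_def sum_paths_Suc sum_distrib_right
proof (rule sum.cong[OF refl])
  fix y
  let ?w = "\<forall>j\<in>{a..b}. y j = s j"
  have window: "(\<forall>j\<in>{a..Suc b}. (y(Suc b := i)) j = s j) \<longleftrightarrow> ?w \<and> i = s (Suc b)" for i
    using ab by (auto simp: atLeastAtMostSuc_conv)
  have "(\<Sum>i\<in>{1..K}. if \<forall>j\<in>{a..Suc b}. (y(Suc b := i)) j = s j
        then joint (Suc b) \<pi> P (y(Suc b := i)) else 0)
      = (\<Sum>i\<in>{1..K}. if i = s (Suc b) then (if ?w then joint b \<pi> P y * P b (y b) i else 0) else 0)"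
    unfolding window using ab by (intro sum.cong) (auto simp: joint_fun_upd_Suc)
  also have "\<dots> = (if ?w then joint b \<pi> P y else 0) * P b (s b) (s (Suc b))"
    using s ab by (simp add: sum.delta)
  finally show "(\<Sum>i\<in>{1..K}. if \<forall>j\<in>{a..Suc b}. (y(Suc b := i)) j = s j
        then joint (Suc b) \<pi> P (y(Suc b := i)) else 0)
      = (if ?w then joint b \<pi> P y else 0) * P b (s b) (s (Suc b))" .
qed

lemma marg_eq_event_prob:
  assumes mc: "is_markov_chain K T \<pi> P" and ab: "1 \<le> a" "a \<le> b" "b \<le> T"
  shows "marg K T \<pi> P a b s = event_prob K b \<pi> P (\<lambda>x. \<forall>i\<in>{a..b}. x i = s i)"
proof -
  have "marg K T \<pi> P a b s = event_prob K T \<pi> P (\<lambda>x. \<forall>i\<in>{a..b}. x i = s i)"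
    unfolding marg_def event_prob_def paths_def by (rule sum.inter_filter) (simp add: finite_PiE)
  also have "\<dots> = event_prob K b \<pi> P (\<lambda>x. \<forall>i\<in>{a..b}. x i = s i)"
    by (rule event_prob_horizon_indep[OF mc]) (use ab in auto)
  finally show ?thesis .
qed

lemma marg_Suc_right:
  assumes mc: "is_markov_chain K T \<pi> P" and ab: "1 \<le> a" "a \<le> b" "Suc b \<le> T"
    and s: "s \<in> paths K T"
  shows "marg K T \<pi> P a (Suc b) s = marg K T \<pi> P a b s * P b (s b) (s (Suc b))"
  using marg_eq_event_prob[OF mc ab(1) _ ab(3)] marg_eq_event_prob[OF mc ab(1,2)] ab
    event_prob_window_Suc[OF ab(1,2) paths_memD[OF s]]
  by simp

lemma marg_prefix:
  assumes mc: "is_markov_chain K T \<pi> P" and m: "1 \<le> m" "m \<le> T"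
    and s: "s \<in> paths K T"
  shows "marg K T \<pi> P 1 m s = marg K T \<pi> P 1 1 s * (\<Prod>t\<in>{1..<m}. P t (s t) (s (Suc t)))"
  using m
proof (induction m rule: dec_induct)
  case base
  then show ?case by simp
next
  case (step m)
  have "{1..<Suc m} = insert m {1..<m}" using step by auto
  then show ?case using step marg_Suc_right[OF mc _ _ _ s, of 1 m] by (simp add: algebra_simps)
qed

lemma marg_window_Suc:
  assumes mc: "is_markov_chain K T \<pi> P" and s: "s \<in> paths K T"
    and k: "1 < k" and j: "2 - int k \<le> j" "j \<le> int T - 1"
  shows "marg K T \<pi> P (nat (max (j + 1) 1)) (nat (min (j + int k) (int T))) s
       = marg K T \<pi> P (nat (max (j + 1) 1)) (nat (min (j + int k - 1) (int T))) s
         * (if j + int k \<le> int T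
            then P (nat (j + int k - 1)) (s (nat (j + int k - 1))) (s (Suc (nat (j + int k - 1))))
            else 1)"
proof (cases "j + int k \<le> int T")
  case True
  define a where "a = nat (max (j + 1) 1)"
  define b where "b = nat (j + int k - 1)"
  have ab: "1 \<le> a" "a \<le> b" "Suc b \<le> T" using True j k unfolding a_def b_def by auto
  have "nat (min (j + int k) (int T)) = Suc b" "nat (min (j + int k - 1) (int T)) = b"
    using True j k unfolding b_def by auto
  then show ?thesis
    using True marg_Suc_right[OF mc ab s] by (simp add: a_def[symmetric] b_def[symmetric])
next
  case False
  with j have "min (j + int k - 1) (int T) = int T" "min (j + int k) (int T) = int T" by auto
  with False show ?thesis by simp
qed

lemma prod_transitions_shifted:
  fixes e :: "nat \<Rightarrow> 'a::comm_monoid_mult"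
  assumes "1 \<le> k"
  shows "(\<Prod>j\<in>{2 - int k..int T - 1}. if j + int k \<le> int T then e (nat (j + int k - 1)) else 1)
       = (\<Prod>t\<in>{1..<T}. e t)"
proof -
  have "(\<Prod>j\<in>{2 - int k..int T - 1}. if j + int k \<le> int T then e (nat (j + int k - 1)) else 1)
      = (\<Prod>j\<in>{2 - int k..int T - int k}. e (nat (j + int k - 1)))"
    by (subst prod.mono_neutral_right[of "{2 - int k..int T - 1}" "{2 - int k..int T - int k}"])
       (use assms in auto)
  also have "\<dots> = (\<Prod>t\<in>{1..<T}. e t)"
    by (rule prod.reindex_bij_witness[of _ "\<lambda>t. int t + 1 - int k" "\<lambda>j. nat (j + int k - 1)"])
       (use assms in auto)
  finally show ?thesis .
qed

lemma Ubar_recursion: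
  assumes mc: "is_markov_chain K T \<pi> P" and k: "1 < k" "k \<le> T" and s: "s \<in> paths K T"
  shows "Ubar K T \<pi> P k s = marg K T \<pi> P 1 T s * Ubar K T \<pi> P (k - 1) s"
proof -
  let ?e = "\<lambda>t. P t (s t) (s (Suc t))"
  let ?w = "\<lambda>l j. marg K T \<pi> P (nat (max (j + 1) 1)) (nat (min (j + l) (int T))) s"
  have Ubar: "Ubar K T \<pi> P l s = (\<Prod>j\<in>{1 - int l..int T - 1}. ?w (int l) j)" for l
    unfolding Ubar_def ..
  have first: "?w (int k) (1 - int k) = marg K T \<pi> P 1 1 s" using k by simp
  have range: "{1 - int k..int T - 1} = insert (1 - int k) {2 - int k..int T - 1}" using k by auto
  have "Ubar K T \<pi> P k s = ?w (int k) (1 - int k) * (\<Prod>j\<in>{2 - int k..int T - 1}. ?w (int k) j)"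
    unfolding Ubar range by (rule prod.insert) auto
  also have "\<dots> = marg K T \<pi> P 1 1 s * (\<Prod>j\<in>{2 - int k..int T - 1}. ?w (int k) j)"
    unfolding first ..
  also have "(\<Prod>j\<in>{2 - int k..int T - 1}. ?w (int k) j)
      = (\<Prod>j\<in>{2 - int k..int T - 1}. ?w (int k - 1) j)
        * (\<Prod>j\<in>{2 - int k..int T - 1}.
            if j + int k \<le> int T then ?e (nat (j + int k - 1)) else 1)"
    unfolding prod.distrib[symmetric]
    by (rule prod.cong[OF refl]) (use marg_window_Suc[OF mc s k(1)] k in \<open>auto simp: algebra_simps\<close>)
  also have "(\<Prod>j\<in>{2 - int k..int T - 1}. ?w (int k - 1) j) = Ubar K T \<pi> P (k - 1) s"
    unfolding Ubar using k by (simp add: of_nat_diff)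
  also have "(\<Prod>j\<in>{2 - int k..int T - 1}.
      if j + int k \<le> int T then ?e (nat (j + int k - 1)) else 1) = (\<Prod>t\<in>{1..<T}. ?e t)"
    using k by (intro prod_transitions_shifted) simp
  also have "marg K T \<pi> P 1 1 s * (Ubar K T \<pi> P (k - 1) s * (\<Prod>t\<in>{1..<T}. ?e t))
      = (marg K T \<pi> P 1 1 s * (\<Prod>t\<in>{1..<T}. ?e t)) * Ubar K T \<pi> P (k - 1) s"
    by (simp add: algebra_simps)
  also have "marg K T \<pi> P 1 1 s * (\<Prod>t\<in>{1..<T}. ?e t) = marg K T \<pi> P 1 T s"
    using marg_prefix[OF mc _ _ s, of T] k by simp
  finally show ?thesis .
qed

lemma eln_mult:
  assumes "x \<ge> 0" "y \<ge> 0"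
  shows "eln (x * y) = eln x + eln y"
  using assms by (auto simp: eln_def ln_mult)

theorem theorem3:
  fixes K T k :: nat and \<pi> :: "nat \<Rightarrow> real" and P :: "nat \<Rightarrow> nat \<Rightarrow> nat \<Rightarrow> real"
    and s :: "nat \<Rightarrow> nat"
  assumes "K > 1" and "T \<ge> 1"
    and "is_markov_chain K T \<pi> P"
    and "1 < k" and "k \<le> T"
    and "s \<in> paths K T"
  shows "Rbar K T \<pi> P k s = Rbar_inf K T \<pi> P s + Rbar K T \<pi> P (k - 1) s"
proof -
  define p where "p = marg K T \<pi> P 1 T s"
  define U where "U = Ubar K T \<pi> P (k - 1) s"
  have "p \<ge> 0" unfolding p_def by (rule marg_nonneg[OF assms(3,2)])
  moreover have "U \<ge> 0" unfolding U_def by (rule Ubar_nonneg[OF assms(3,2)])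
  moreover have "Ubar K T \<pi> P k s = p * U"
    unfolding p_def U_def by (rule Ubar_recursion[OF assms(3-6)])
  ultimately have "Rbar K T \<pi> P k s = - (ereal (1 / real T) * (eln p + eln U))"
    unfolding Rbar_def by (simp add: eln_mult)
  also have "\<dots> = - (ereal (1 / real T) * eln p) + - (ereal (1 / real T) * eln U)"
    using \<open>T \<ge> 1\<close> by (cases "p = 0"; cases "U = 0") (auto simp: eln_def add_divide_distrib)
  finally show ?thesis unfolding Rbar_def Rbar_inf_def p_def U_def .
qed

end
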